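(* For every general S4K-frame $\mathfrak F$ and every $\mathcal L_{\multimap}$-formula $\varphi$: $\mathfrak F\Vdash t(\varphi)$ if and only if $\hat\rho\mathfrak F\Vdash\varphi$.
   Context: $\mathcal L_{\multimap}$: atoms, $\top,\bot,\wedge,\vee,\to,\multimap$. $\mathcal L_{i,m}$: classical bimodal language with boxes $\Box_i,\Box_m$. The translation $t:\mathcal L_{\multimap}\to\mathcal L_{i,m}$: $t(p)=\Box_ip$, $t(\top)=\top$, $t(\bot)=\bot$, $t(\varphi\wedge\psi)=\Box_i(t\varphi\wedge t\psi)$, $t(\varphi\vee\psi)=\Box_i(t\varphi\vee t\psi)$, $t(\varphi\to\psi)=\Box_i(t\varphi\to t\psi)$, $t(\varphi\multimap\psi)=\Box_i\Box_m(t\varphi\to t\psi)$. General S4K-frame $(X,R_i,R_m,P)$: $R_i$ preorder, $R_m$ binary relation, $P$ Boolean subalgebra of $\mathcal P(X)$ closed under $[i]a=\{x\mid\forall y(xR_iy\Rightarrow y\in a)\}$ and $[m]a$ (likewise); $\mathfrak F\Vdash\chi$ means $\chi$ is true at all points under all valuations into $P$ (standard Kripke clauses). For such $\mathfrak F$: $xR_m^*z$ iff $\exists y(xR_iy\wedge yR_mz)$; $x\sim y$ iff $xR_iy\wedge yR_ix$; $[x]$ its class, $[X]$ the classes; $[x][R_i][y]$ iff $xR_iy$; $[x][R_m^*][y]$ iff $xR_m^*y'$ for some $y'\sim y$; $\hat\rho P:=\{\{[x]\mid x\in[i]b\}\mid b\in P\}$; $\hat\rho\mathfrak F:=([X],[R_i],[R_m^*],\hat\rho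 P)$, a general $\multimap$-frame. For a general $\multimap$-frame $(Y,\preceq,\sqsubset,Q)$ (here $Q$ is a family of $\preceq$-upsets closed under the relevant operations), $\Vdash\varphi$ means: under every valuation into $Q$ the truth set of $\varphi$ is $Y$, where $\to$ is interpreted by $a\Rightarrow b=\{x\mid\forall y(x\preceq y,y\in a\Rightarrow y\in b)\}$ and $\multimap$ by $a\Rrightarrow b=\{x\mid\forall y(x\sqsubset y,y\in a\Rightarrow y\in b)\}$, $\wedge,\vee$ by $\cap,\cup$. *)

theory Defs
  imports Main
begin

datatype 'v ifm =
    IAtom 'v | ITop | IBot
  | IAnd "'v ifm" "'v ifm" | IOr "'v ifm" "'v ifm"
  | IImp "'v ifm" "'v ifm" | ILimp "'v ifm" "'v ifm"

datatype 'v mfm =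
    MAtom 'v | MTop | MBot | MNot "'v mfm"
  | MAnd "'v mfm" "'v mfm" | MOr "'v mfm" "'v mfm" | MImp "'v mfm" "'v mfm"
  | BoxI "'v mfm" | BoxM "'v mfm"

fun tr :: "'v ifm \<Rightarrow> 'v mfm" where
  "tr (IAtom p) = BoxI (MAtom p)"
| "tr ITop = MTop"
| "tr IBot = MBot"
| "tr (IAnd a b) = BoxI (MAnd (tr a) (tr b))"
| "tr (IOr a b) = BoxI (MOr (tr a) (tr b))"
| "tr (IImp a b) = BoxI (MImp (tr a) (tr b))"
| "tr (ILimp a b) = BoxI (BoxM (MImp (tr a) (tr b)))"

definition boxset :: "'a set \<Rightarrow> ('a \<Rightarrow> 'a \<Rightarrow> bool) \<Rightarrow> 'a set \<Rightarrow> 'a set" where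
  "boxset X R a = {x \<in> X. \<forall>y. R x y \<longrightarrow> y \<in> a}"

definition gen_S4K_frame ::
  "'a set \<Rightarrow> ('a \<Rightarrow> 'a \<Rightarrow> bool) \<Rightarrow> ('a \<Rightarrow> 'a \<Rightarrow> bool) \<Rightarrow> 'a set set \<Rightarrow> bool" where
  "gen_S4K_frame X Ri Rm P \<longleftrightarrow>
     (\<forall>x y. Ri x y \<longrightarrow> x \<in> X \<and> y \<in> X) \<and>
     (\<forall>x y. Rm x y \<longrightarrow> x \<in> X \<and> y \<in> X) \<and>
     (\<forall>x\<in>X. Ri x x) \<and>
     (\<forall>x y z. Ri x y \<longrightarrow> Ri y z \<longrightarrow> Ri x z) \<and>
     P \<subseteq> Pow X \<and> {} \<in> P \<and> X \<in> P \<and>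
     (\<forall>a\<in>P. X - a \<in> P) \<and>
     (\<forall>a\<in>P. \<forall>b\<in>P. a \<inter> b \<in> P) \<and>
     (\<forall>a\<in>P. \<forall>b\<in>P. a \<union> b \<in> P) \<and>
     (\<forall>a\<in>P. boxset X Ri a \<in> P) \<and>
     (\<forall>a\<in>P. boxset X Rm a \<in> P)"

fun mtrue :: "('a \<Rightarrow> 'a \<Rightarrow> bool) \<Rightarrow> ('a \<Rightarrow> 'a \<Rightarrow> bool) \<Rightarrow> ('v \<Rightarrow> 'a set) \<Rightarrow> 'a \<Rightarrow> 'v mfm \<Rightarrow> bool" where
  "mtrue Ri Rm V x (MAtom p) = (x \<in> V p)"
| "mtrue Ri Rm V x MTop = True"
| "mtrue Ri Rm V x MBot = False"
| "mtrue Ri Rm V x (MNot a) = (\<not> mtrue Ri Rm V x a)"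
| "mtrue Ri Rm V x (MAnd a b) = (mtrue Ri Rm V x a \<and> mtrue Ri Rm V x b)"
| "mtrue Ri Rm V x (MOr a b) = (mtrue Ri Rm V x a \<or> mtrue Ri Rm V x b)"
| "mtrue Ri Rm V x (MImp a b) = (mtrue Ri Rm V x a \<longrightarrow> mtrue Ri Rm V x b)"
| "mtrue Ri Rm V x (BoxI a) = (\<forall>y. Ri x y \<longrightarrow> mtrue Ri Rm V y a)"
| "mtrue Ri Rm V x (BoxM a) = (\<forall>y. Rm x y \<longrightarrow> mtrue Ri Rm V y a)"

definition frame_valid ::
  "'a set \<Rightarrow> ('a \<Rightarrow> 'a \<Rightarrow> bool) \<Rightarrow> ('a \<Rightarrow> 'a \<Rightarrow> bool) \<Rightarrow> 'a set set \<Rightarrow> 'v mfm \<Rightarrow> bool" where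
  "frame_valid X Ri Rm P \<chi> \<longleftrightarrow>
     (\<forall>V. (\<forall>p. V p \<in> P) \<longrightarrow> (\<forall>x\<in>X. mtrue Ri Rm V x \<chi>))"

fun ival :: "'b set \<Rightarrow> ('b \<Rightarrow> 'b \<Rightarrow> bool) \<Rightarrow> ('b \<Rightarrow> 'b \<Rightarrow> bool) \<Rightarrow> ('v \<Rightarrow> 'b set) \<Rightarrow> 'v ifm \<Rightarrow> 'b set" where
  "ival Y le sq v (IAtom p) = v p"
| "ival Y le sq v ITop = Y"
| "ival Y le sq v IBot = {}"
| "ival Y le sq v (IAnd a b) = ival Y le sq v a \<inter> ival Y le sq v b"
| "ival Y le sq v (IOr a b) = ival Y le sq v a \<union> ival Y le sq v b"
| "ival Y le sq v (IImp a b) =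
     {x \<in> Y. \<forall>y. le x y \<longrightarrow> y \<in> ival Y le sq v a \<longrightarrow> y \<in> ival Y le sq v b}"
| "ival Y le sq v (ILimp a b) =
     {x \<in> Y. \<forall>y. sq x y \<longrightarrow> y \<in> ival Y le sq v a \<longrightarrow> y \<in> ival Y le sq v b}"

definition limp_valid ::
  "'b set \<Rightarrow> ('b \<Rightarrow> 'b \<Rightarrow> bool) \<Rightarrow> ('b \<Rightarrow> 'b \<Rightarrow> bool) \<Rightarrow> 'b set set \<Rightarrow> 'v ifm \<Rightarrow> bool" where
  "limp_valid Y le sq Q \<phi> \<longleftrightarrow>
     (\<forall>v. (\<forall>p. v p \<in> Q) \<longrightarrow> ival Y le sq v \<phi> = Y)"

definition Rmstar :: "('a \<Rightarrow> 'a \<Rightarrow> bool) \<Rightarrow> ('a \<Rightarrow> 'a \<Rightarrow> bool) \<Rightarrow> 'a \<Rightarrow> 'a \<Rightarrow> bool" where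
  "Rmstar Ri Rm x z \<longleftrightarrow> (\<exists>y. Ri x y \<and> Rm y z)"

definition equivI :: "('a \<Rightarrow> 'a \<Rightarrow> bool) \<Rightarrow> 'a \<Rightarrow> 'a \<Rightarrow> bool" where
  "equivI Ri x y \<longleftrightarrow> Ri x y \<and> Ri y x"

definition cls :: "'a set \<Rightarrow> ('a \<Rightarrow> 'a \<Rightarrow> bool) \<Rightarrow> 'a \<Rightarrow> 'a set" where
  "cls X Ri x = {y \<in> X. equivI Ri x y}"

definition rho_carrier :: "'a set \<Rightarrow> ('a \<Rightarrow> 'a \<Rightarrow> bool) \<Rightarrow> 'a set set" where
  "rho_carrier X Ri = cls X Ri ` X"

definition rho_Ri :: "'a set \<Rightarrow> ('a \<Rightarrow> 'a \<Rightarrow> bool) \<Rightarrow> 'a set \<Rightarrow> 'a set \<Rightarrow> bool" where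
  "rho_Ri X Ri c d \<longleftrightarrow>
     (\<exists>x\<in>X. \<exists>y\<in>X. c = cls X Ri x \<and> d = cls X Ri y \<and> Ri x y)"

definition rho_Rm :: "'a set \<Rightarrow> ('a \<Rightarrow> 'a \<Rightarrow> bool) \<Rightarrow> ('a \<Rightarrow> 'a \<Rightarrow> bool) \<Rightarrow> 'a set \<Rightarrow> 'a set \<Rightarrow> bool" where
  "rho_Rm X Ri Rm c d \<longleftrightarrow>
     (\<exists>x\<in>X. \<exists>y\<in>X. c = cls X Ri x \<and> d = cls X Ri y \<and>
        (\<exists>y'. equivI Ri y' y \<and> Rmstar Ri Rm x y'))"

definition rho_P :: "'a set \<Rightarrow> ('a \<Rightarrow> 'a \<Rightarrow> bool) \<Rightarrow> 'a set set \<Rightarrow> 'a set set set" where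
  "rho_P X Ri P = {cls X Ri ` boxset X Ri b | b. b \<in> P}"

end

theory Submission
  imports Defs
begin

text \<open>Truth sets of translated formulas are R_i-upsets, so truth of t(\<phi>) at x depends
  only on the cluster [x]. A valuation V into P induces the valuation
  p \<mapsto> {[x] | x \<in> [i]V(p)}, and these are exactly the valuations into \<rho>P. By induction
  on \<phi>, x satisfies t(\<phi>) under V iff [x] lies in the truth set of \<phi> under the induced
  valuation. The only non-obvious case is \<multimap>: [x] [R_m*] d holds iff d = [z] for some z
  with x R_m* z, so the clause for \<multimap> matches the clause for \<box>_i \<box>_m.\<close>

lemma ival_subset:
  assumes "\<And>p. v p \<subseteq> Y"
  shows "ival Y le sq v \<phi> \<subseteq> Y"
  using assms by (induction \<phi>) auto

locale s4k_frame =
  fixes X :: "'a set" and Ri Rm :: "'a \<Rightarrow> 'a \<Rightarrow> bool"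
  assumes Ri_in: "Ri x y \<Longrightarrow> y \<in> X"
    and Rm_in: "Rm x y \<Longrightarrow> y \<in> X"
    and Ri_refl: "x \<in> X \<Longrightarrow> Ri x x"
    and Ri_trans: "Ri x y \<Longrightarrow> Ri y z \<Longrightarrow> Ri x z"

lemma gen_S4K_frame_imp_s4k_frame:
  assumes "gen_S4K_frame X Ri Rm P"
  shows "s4k_frame X Ri Rm"
  using assms unfolding gen_S4K_frame_def s4k_frame_def
  by (elim conjE) (intro conjI allI impI; blast)

context s4k_frame
begin

abbreviation cl :: "'a \<Rightarrow> 'a set" where
  "cl \<equiv> cls X Ri"

abbreviation rho_ival :: "('v \<Rightarrow> 'a set set) \<Rightarrow> 'v ifm \<Rightarrow> 'a set set" where
  "rho_ival v \<equiv> ival (rho_carrier X Ri) (rho_Ri X Ri) (rho_Rm X Ri Rm) v"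

abbreviation rho_val :: "('v \<Rightarrow> 'a set) \<Rightarrow> 'v \<Rightarrow> 'a set set" where
  "rho_val V p \<equiv> cl ` boxset X Ri (V p)"

lemma cls_eq_iff:
  assumes "x \<in> X" "y \<in> X"
  shows "cl x = cl y \<longleftrightarrow> equivI Ri x y"
  using assms Ri_refl Ri_trans unfolding cls_def equivI_def by blast

lemma mtrue_tr_upward:
  assumes "mtrue Ri Rm V x (tr \<phi>)" "Ri x y"
  shows "mtrue Ri Rm V y (tr \<phi>)"
  using assms by (cases \<phi>) (auto intro: Ri_trans)

lemma cls_in_image_boxset_iff:
  assumes "x \<in> X"
  shows "cl x \<in> cl ` boxset X Ri a \<longleftrightarrow> x \<in> boxset X Ri a"
proof
  assume "cl x \<in> cl ` boxset X Ri a"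
  then obtain z where z: "z \<in> boxset X Ri a" "cl x = cl z" by blast
  then have "Ri z x"
    using assms cls_eq_iff unfolding boxset_def equivI_def by blast
  then show "x \<in> boxset X Ri a"
    using z(1) assms Ri_trans unfolding boxset_def by blast
qed blast

lemma rho_Ri_cls_iff:
  assumes "x \<in> X"
  shows "rho_Ri X Ri (cl x) d \<longleftrightarrow> (\<exists>y. Ri x y \<and> d = cl y)"
proof
  assume "rho_Ri X Ri (cl x) d"
  then obtain x' y where "x' \<in> X" "cl x = cl x'" "d = cl y" "Ri x' y"
    unfolding rho_Ri_def by blast
  then show "\<exists>y. Ri x y \<and> d = cl y"
    using assms cls_eq_iff Ri_trans unfolding equivI_def by blast
qed (use assms Ri_in in \<open>auto simp: rho_Ri_def\<close>)

lemma rho_Rm_cls_iff: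
  assumes "x \<in> X"
  shows "rho_Rm X Ri Rm (cl x) d \<longleftrightarrow> (\<exists>z. Rmstar Ri Rm x z \<and> d = cl z)"
proof
  assume "rho_Rm X Ri Rm (cl x) d"
  then obtain x' z y' w where "x' \<in> X" "z \<in> X" "cl x = cl x'" "d = cl z"
      "equivI Ri y' z" "Ri x' w" "Rm w y'"
    unfolding rho_Rm_def Rmstar_def by blast
  moreover from this have "cl y' = cl z" "Ri x w"
    using assms cls_eq_iff Rm_in Ri_trans unfolding equivI_def by blast+
  ultimately show "\<exists>z. Rmstar Ri Rm x z \<and> d = cl z"
    unfolding Rmstar_def by metis
next
  assume "\<exists>z. Rmstar Ri Rm x z \<and> d = cl z"
  then obtain z where "Rmstar Ri Rm x z" "d = cl z" by blast
  moreover from this have "z \<in> X"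
    unfolding Rmstar_def using Rm_in by blast
  ultimately show "rho_Rm X Ri Rm (cl x) d"
    using assms Ri_refl unfolding rho_Rm_def equivI_def by blast
qed

lemma cls_in_rho_carrier: "x \<in> X \<Longrightarrow> cl x \<in> rho_carrier X Ri"
  unfolding rho_carrier_def by blast

lemma mtrue_tr_iff_cls_in_rho_ival:
  assumes "x \<in> X"
  shows "mtrue Ri Rm V x (tr \<phi>) \<longleftrightarrow> cl x \<in> rho_ival (rho_val V) \<phi>"
  using assms
proof (induction \<phi> arbitrary: x)
  case (IAtom p)
  then show ?case
    by (simp add: cls_in_image_boxset_iff) (simp add: boxset_def)
next
  case ITop
  then show ?case by (simp add: cls_in_rho_carrier)
next
  case (IAnd a b)
  have "mtrue Ri Rm V x (tr (IAnd a b)) \<longleftrightarrow> mtrue Ri Rm V x (tr a) \<and> mtrue Ri Rm V x (tr b)"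
    using IAnd.prems Ri_refl mtrue_tr_upward[of V _ a] mtrue_tr_upward[of V _ b] by auto
  then show ?case
    using IAnd by simp
next
  case (IOr a b)
  have "mtrue Ri Rm V x (tr (IOr a b)) \<longleftrightarrow> mtrue Ri Rm V x (tr a) \<or> mtrue Ri Rm V x (tr b)"
    using IOr.prems Ri_refl mtrue_tr_upward[of V _ a] mtrue_tr_upward[of V _ b] by simp blast
  then show ?case
    using IOr by simp
next
  case (IImp a b)
  have "cl x \<in> rho_ival (rho_val V) (IImp a b) \<longleftrightarrow>
      (\<forall>y. Ri x y \<longrightarrow> cl y \<in> rho_ival (rho_val V) a \<longrightarrow> cl y \<in> rho_ival (rho_val V) b)"
    using IImp.prems by (auto simp: rho_Ri_cls_iff cls_in_rho_carrier)
  also have "\<dots> \<longleftrightarrow> mtrue Ri Rm V x (tr (IImp a b))"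
    using IImp.IH Ri_in by auto
  finally show ?case ..
next
  case (ILimp a b)
  have "cl x \<in> rho_ival (rho_val V) (ILimp a b) \<longleftrightarrow>
      (\<forall>z. Rmstar Ri Rm x z \<longrightarrow> cl z \<in> rho_ival (rho_val V) a \<longrightarrow> cl z \<in> rho_ival (rho_val V) b)"
    using ILimp.prems by (auto simp: rho_Rm_cls_iff cls_in_rho_carrier)
  also have "\<dots> \<longleftrightarrow> mtrue Ri Rm V x (tr (ILimp a b))"
    using ILimp.IH Rm_in by (auto simp: Rmstar_def)
  finally show ?case ..
qed simp

lemma all_mtrue_tr_iff_rho_ival_eq:
  "(\<forall>x\<in>X. mtrue Ri Rm V x (tr \<phi>)) \<longleftrightarrow> rho_ival (rho_val V) \<phi> = rho_carrier X Ri"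
proof -
  have "rho_val V p \<subseteq> rho_carrier X Ri" for p
    unfolding rho_carrier_def boxset_def by blast
  then have "rho_ival (rho_val V) \<phi> \<subseteq> rho_carrier X Ri"
    by (rule ival_subset)
  moreover have "(\<forall>x\<in>X. mtrue Ri Rm V x (tr \<phi>)) \<longleftrightarrow> rho_carrier X Ri \<subseteq> rho_ival (rho_val V) \<phi>"
    by (simp add: rho_carrier_def image_subset_iff mtrue_tr_iff_cls_in_rho_ival)
  ultimately show ?thesis
    by blast
qed

lemma valuation_into_rho_P_iff:
  "(\<forall>p. v p \<in> rho_P X Ri P) \<longleftrightarrow> (\<exists>V. (\<forall>p. V p \<in> P) \<and> v = rho_val V)"
proof
  assume "\<forall>p. v p \<in> rho_P X Ri P"
  then have "\<forall>p. \<exists>b. b \<in> P \<and> v p = cl ` boxset X Ri b"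
    unfolding rho_P_def by blast
  then obtain V where "\<forall>p. V p \<in> P \<and> v p = rho_val V p"
    by (metis choice)
  then show "\<exists>V. (\<forall>p. V p \<in> P) \<and> v = rho_val V"
    by blast
qed (auto simp: rho_P_def)

end

theorem lemma4p11:
  fixes X :: "'a set" and Ri Rm :: "'a \<Rightarrow> 'a \<Rightarrow> bool" and P :: "'a set set"
    and \<phi> :: "'v ifm"
  assumes "gen_S4K_frame X Ri Rm P"
  shows "frame_valid X Ri Rm P (tr \<phi>) \<longleftrightarrow>
         limp_valid (rho_carrier X Ri) (rho_Ri X Ri) (rho_Rm X Ri Rm) (rho_P X Ri P) \<phi>"
proof -
  interpret s4k_frame X Ri Rm
    using assms by (rule gen_S4K_frame_imp_s4k_frame)
  have "frame_valid X Ri Rm P (tr \<phi>) \<longleftrightarrow>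
      (\<forall>V. (\<forall>p. V p \<in> P) \<longrightarrow> rho_ival (rho_val V) \<phi> = rho_carrier X Ri)"
    unfolding frame_valid_def all_mtrue_tr_iff_rho_ival_eq ..
  also have "\<dots> \<longleftrightarrow> limp_valid (rho_carrier X Ri) (rho_Ri X Ri) (rho_Rm X Ri Rm) (rho_P X Ri P) \<phi>"
    unfolding limp_valid_def valuation_into_rho_P_iff by blast
  finally show ?thesis .
qed

end
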